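(* Let $A$ be a non-empty set and $N$ a submagma of the free magma $\mathbb{M}_A$. Then $N$ is closed if and only if $\mathcal{G}(N)\subseteq A$. In particular, the closed submagmas of $\mathbb{M}_A$ are exactly the submagmas $\mathbb{M}_B=\langle B\rangle$ with $B\subseteq A$.
   Context: $\mathbb{M}_A$ is the free magma on $A$ (non-associative words over $A$, with $x+y=(x,y)$); for $B\subseteq A$, $\mathbb{M}_B=\langle B\rangle$ is the submagma generated by $B$ (empty if $B=\emptyset$). A subset $X$ of a magma $M$ is closed if $x+y\in X$ implies $x,y\in X$. For a submagma $N\subseteq\mathbb{M}_A$, $\mathcal{G}(N)$ is the unique minimal generating set of $N$, namely the set of elements of $N$ that cannot be written as $x+y$ with $x,y\in N$ ($\mathcal{G}(\emptyset)=\emptyset$). *)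

theory Defs
  imports Main
begin

datatype 'a mag = Gen 'a | Op "'a mag" "'a mag"

definition free_magma :: "'a set \<Rightarrow> 'a mag set" where
  "free_magma A = {x. set_mag x \<subseteq> A}"

definition submagma :: "'a set \<Rightarrow> 'a mag set \<Rightarrow> bool" where
  "submagma A N \<longleftrightarrow> N \<subseteq> free_magma A \<and> (\<forall>x\<in>N. \<forall>y\<in>N. Op x y \<in> N)"

inductive_set generated :: "'a mag set \<Rightarrow> 'a mag set" for S where
  gen_base: "x \<in> S \<Longrightarrow> x \<in> generated S"
| gen_op: "x \<in> generated S \<Longrightarrow> y \<in> generated S \<Longrightarrow> Op x y \<in> generated S"

definition closed_in_magma :: "'a set \<Rightarrow> 'a mag set \<Rightarrow> bool" where
  "closed_in_magma A X \<longleftrightarrow> (\<forall>x\<in>free_magma A. \<forall>y\<in>free_magma A. Op x y \<in> X \<longrightarrow> x \<in> X \<and> y \<in> X)"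

definition min_gen :: "'a mag set \<Rightarrow> 'a mag set" where
  "min_gen N = {z \<in> N. \<not> (\<exists>x\<in>N. \<exists>y\<in>N. z = Op x y)}"

end

theory Submission
  imports Defs
begin

(* Every element of a submagma N is generated by min_gen N, by induction on the word.
   If N is closed, a product in N has both factors in N, so min_gen N consists of letters;
   then N is generated by the letters it contains. Conversely, in a submagma generated by
   letters a product arises only from its two factors, which is closedness. *)

lemma mem_generated_min_gen:
  assumes "z \<in> N"
  shows "z \<in> generated (min_gen N)"
  using assms
proof (induction z)
  case (Gen a)
  then show ?case by (auto simp: min_gen_def intro: generated.gen_base)
next
  case (Op x y)
  show ?case
  proof (cases "Op x y \<in> min_gen N")
    case True
    then show ?thesis by (rule generated.gen_base)
  next
    case False
    with Op.prems have "x \<in> N" "y \<in> N" by (auto simp: min_gen_def)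
    with Op.IH show ?thesis by (auto intro: generated.gen_op)
  qed
qed

lemma generated_subset:
  assumes "S \<subseteq> N" and "\<And>x y. x \<in> N \<Longrightarrow> y \<in> N \<Longrightarrow> Op x y \<in> N"
  shows "generated S \<subseteq> N"
proof
  fix z assume "z \<in> generated S"
  then show "z \<in> N" by (induction z rule: generated.induct) (use assms in auto)
qed

lemma generated_min_gen_eq:
  assumes "\<And>x y. x \<in> N \<Longrightarrow> y \<in> N \<Longrightarrow> Op x y \<in> N"
  shows "generated (min_gen N) = N"
  using generated_subset[of "min_gen N" N] assms mem_generated_min_gen
  by (auto simp: min_gen_def)

lemma Op_mem_generated_Gen_iff:
  "Op x y \<in> generated (Gen ` B) \<longleftrightarrow> x \<in> generated (Gen ` B) \<and> y \<in> generated (Gen ` B)"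
proof
  assume "Op x y \<in> generated (Gen ` B)"
  then show "x \<in> generated (Gen ` B) \<and> y \<in> generated (Gen ` B)"
    by (cases rule: generated.cases) auto
qed (auto intro: generated.gen_op)

lemma closed_in_magma_generated_Gen: "closed_in_magma A (generated (Gen ` B))"
  by (simp add: closed_in_magma_def Op_mem_generated_Gen_iff)

lemma min_gen_subset_Gen_if_closed:
  assumes "submagma A N" and "closed_in_magma A N"
  shows "min_gen N \<subseteq> Gen ` A"
proof
  fix z assume z: "z \<in> min_gen N"
  then have "z \<in> N" by (simp add: min_gen_def)
  with assms(1) have letters: "set_mag z \<subseteq> A"
    by (auto simp: submagma_def free_magma_def)
  show "z \<in> Gen ` A"
  proof (cases z)
    case (Gen a)
    with letters show ?thesis by auto
  next
    case (Op x y)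
    with assms(2) \<open>z \<in> N\<close> letters have "x \<in> N" "y \<in> N"
      by (auto simp: closed_in_magma_def free_magma_def)
    with z Op show ?thesis by (auto simp: min_gen_def)
  qed
qed

lemma eq_generated_letters_if_min_gen_subset_Gen:
  assumes "submagma A N" and "min_gen N \<subseteq> Gen ` A"
  shows "N = generated (Gen ` {a \<in> A. Gen a \<in> N})"
proof -
  have "min_gen N = Gen ` {a \<in> A. Gen a \<in> N}"
    using assms(2) by (auto simp: min_gen_def)
  moreover have "generated (min_gen N) = N"
    using assms(1) by (intro generated_min_gen_eq) (auto simp: submagma_def)
  \<comment> \<open>Plain \<open>simp\<close> loops here, as \<open>N\<close> occurs inside both rewrite rules.\<close>
  ultimately show ?thesis by (simp only:)
qed

theorem lemma6p2:
  fixes A :: "'a set" and N :: "'a mag set"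
  assumes "A \<noteq> {}" and "submagma A N"
  shows "(closed_in_magma A N \<longleftrightarrow> min_gen N \<subseteq> Gen ` A)
    \<and> (closed_in_magma A N \<longleftrightarrow> (\<exists>B \<subseteq> A. N = generated (Gen ` B)))"
proof -
  have "closed_in_magma A N \<Longrightarrow> min_gen N \<subseteq> Gen ` A"
    using assms(2) by (rule min_gen_subset_Gen_if_closed)
  moreover have "\<exists>B \<subseteq> A. N = generated (Gen ` B)" if "min_gen N \<subseteq> Gen ` A"
  proof (intro exI conjI)
    show "{a \<in> A. Gen a \<in> N} \<subseteq> A" by blast
    show "N = generated (Gen ` {a \<in> A. Gen a \<in> N})"
      using assms(2) that by (rule eq_generated_letters_if_min_gen_subset_Gen)
  qed
  moreover have "closed_in_magma A N" if "\<exists>B \<subseteq> A. N = generated (Gen ` B)"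
    using that closed_in_magma_generated_Gen by auto
  ultimately show ?thesis by argo
qed

end
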